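(* Let $X$ be an $X$-set parameter, let $G$ and $G'$ be graphs with no isolated vertices, and let $\tilde\varphi:\mathscr{X}^{\rm TAR}(G)\to\mathscr{X}^{\rm TAR}(G')$ be a graph isomorphism. Then $R'=V(G')\setminus\tilde\varphi(V(G))$ is an $X$-irrelevant set of $G'$, and $\varphi=\nu_{R'}\circ\tilde\varphi$ is an isomorphism from $\mathscr{X}^{\rm TAR}(G)$ to $\mathscr{X}^{\rm TAR}(G')$ such that $|\varphi(S)|=|S|$ for every vertex $S$ of $\mathscr{X}^{\rm TAR}(G)$.
   Context: All graphs are simple, finite, with nonempty vertex set. An $X$-set parameter is a graph parameter $X(G)$ defined as the minimum cardinality of an $X$-set of $G$, where the $X$-sets of each graph are subsets of its vertex set determined by some property satisfying: (1) supersets (within $V(G)$) of $X$-sets are $X$-sets; (2) the empty set is never an $X$-set; (3) an $X$-set of a disconnected graph is the union of an $X$-set of each component; (4) if $G$ has no isolated vertices, every set of $|V(G)|-1$ vertices is an $X$-set. The $X$-TAR graph $\mathscr{X}^{\rm TAR}(G)$ has as vertices all $X$-sets of $G$, with $S_1,S_2$ adjacent iff $|S_1\ominus S_2|=1$ (symmetric difference). A vertex $v$ of $G$ is $X$-irrelevant if $v\notin S$ for every minimal $X$-set $S$ of $G$; a set $R\subseteq V(G)$ is $X$-irrelevant if all its vertices are. For $R\subseteq V(G)$, $\nu_R$ is the map on $X$-sets of $G$ given by $\nu_R(S)=S\ominus R$. *)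

theory Defs
  imports Main
begin

definition sgraph :: "'v set \<Rightarrow> ('v \<times> 'v) set \<Rightarrow> bool" where
  "sgraph V E \<longleftrightarrow> finite V \<and> V \<noteq> {} \<and> E \<subseteq> V \<times> V \<and> sym E \<and> irrefl E"

definition no_isolated :: "'v set \<Rightarrow> ('v \<times> 'v) set \<Rightarrow> bool" where
  "no_isolated V E \<longleftrightarrow> (\<forall>v\<in>V. \<exists>u. (v, u) \<in> E)"

definition induced :: "'v set \<Rightarrow> ('v \<times> 'v) set \<Rightarrow> ('v \<times> 'v) set" where
  "induced C E = E \<inter> (C \<times> C)"

definition components :: "'v set \<Rightarrow> ('v \<times> 'v) set \<Rightarrow> 'v set set" where
  "components V E = {(E\<^sup>*) `` {v} | v. v \<in> V}"

definition gconnected :: "'v set \<Rightarrow> ('v \<times> 'v) set \<Rightarrow> bool" where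
  "gconnected V E \<longleftrightarrow> (\<forall>u\<in>V. \<forall>v\<in>V. (u, v) \<in> E\<^sup>*)"

definition Xset_param :: "('v set \<Rightarrow> ('v \<times> 'v) set \<Rightarrow> 'v set set) \<Rightarrow> bool" where
  "Xset_param Xs \<longleftrightarrow> (\<forall>V E. sgraph V E \<longrightarrow>
      (\<forall>S\<in>Xs V E. S \<subseteq> V)
    \<and> (\<forall>S T. S \<in> Xs V E \<longrightarrow> S \<subseteq> T \<longrightarrow> T \<subseteq> V \<longrightarrow> T \<in> Xs V E)
    \<and> {} \<notin> Xs V E
    \<and> (\<not> gconnected V E \<longrightarrow> (\<forall>S. S \<in> Xs V E \<longleftrightarrow>
          (\<exists>f. (\<forall>C\<in>components V E. f C \<in> Xs C (induced C E))
               \<and> S = \<Union>(f ` components V E))))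
    \<and> (no_isolated V E \<longrightarrow> (\<forall>S. S \<subseteq> V \<longrightarrow> card S = card V - 1 \<longrightarrow> S \<in> Xs V E)))"

definition symdiff :: "'a set \<Rightarrow> 'a set \<Rightarrow> 'a set" where
  "symdiff A B = (A - B) \<union> (B - A)"

text \<open>Adjacency in the X-TAR graph (whose vertex set is Xs V E).\<close>
definition tar_adj :: "'v set \<Rightarrow> 'v set \<Rightarrow> bool" where
  "tar_adj S1 S2 \<longleftrightarrow> card (symdiff S1 S2) = 1"

definition tar_iso ::
  "('v set \<Rightarrow> ('v \<times> 'v) set \<Rightarrow> 'v set set) \<Rightarrow> 'v set \<Rightarrow> ('v \<times> 'v) set
    \<Rightarrow> 'v set \<Rightarrow> ('v \<times> 'v) set \<Rightarrow> ('v set \<Rightarrow> 'v set) \<Rightarrow> bool" where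
  "tar_iso Xs V E V' E' \<phi> \<longleftrightarrow> bij_betw \<phi> (Xs V E) (Xs V' E')
     \<and> (\<forall>S1\<in>Xs V E. \<forall>S2\<in>Xs V E. tar_adj S1 S2 \<longleftrightarrow> tar_adj (\<phi> S1) (\<phi> S2))"

definition minimal_Xset where
  "minimal_Xset Xs V E S \<longleftrightarrow> S \<in> Xs V E \<and> (\<forall>T. T \<subset> S \<longrightarrow> T \<notin> Xs V E)"

definition X_irrelevant_vertex where
  "X_irrelevant_vertex Xs V E v \<longleftrightarrow> v \<in> V \<and> (\<forall>S. minimal_Xset Xs V E S \<longrightarrow> v \<notin> S)"

definition X_irrelevant_set where
  "X_irrelevant_set Xs V E R \<longleftrightarrow> R \<subseteq> V \<and> (\<forall>v\<in>R. X_irrelevant_vertex Xs V E v)"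

definition nu :: "'v set \<Rightarrow> 'v set \<Rightarrow> 'v set" where
  "nu R S = symdiff S R"

end

theory Submission
  imports Defs
begin

text \<open>The X-sets of a graph without isolated vertices form an up-closed family \<open>U\<close> on \<open>V\<close>
  containing \<open>V\<close> and all \<open>V - {v}\<close>. In its TAR graph the distance between \<open>x\<close> and \<open>a\<close> is
  \<open>|x \<ominus> a|\<close> (walk up to \<open>x \<union> a\<close>, then down to \<open>a\<close>), so a TAR isomorphism \<open>\<phi>\<close> preserves
  these quantities. Every \<open>x\<close> has all \<open>|x \<ominus> V|\<close> conceivable neighbours closer to the top \<open>V\<close>;
  hence every \<open>T\<close> of \<open>U'\<close> has all its neighbours \<open>T \<ominus> {u}\<close>, \<open>u \<in> T \<ominus> \<phi> V\<close>, in \<open>U'\<close>.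
  In particular vertices of \<open>R = V' - \<phi> V\<close> can always be removed, which makes \<open>R\<close>
  irrelevant and \<open>\<nu>\<^sub>R\<close> an automorphism of the TAR graph. The tops have maximum degree
  \<open>|V|\<close> and \<open>|V'|\<close>, so \<open>|V| = |V'|\<close>, and then
  \<open>|\<phi> S \<ominus> R| = |V'| - |\<phi> S \<ominus> \<phi> V| = |V| - |V - S| = |S|\<close>.\<close>

definition up_family :: "'v set \<Rightarrow> 'v set set \<Rightarrow> bool" where
  "up_family V U \<longleftrightarrow> finite V \<and> (\<forall>S\<in>U. S \<subseteq> V)
     \<and> (\<forall>S T. S \<in> U \<longrightarrow> S \<subseteq> T \<longrightarrow> T \<subseteq> V \<longrightarrow> T \<in> U)
     \<and> (\<forall>v\<in>V. V - {v} \<in> U) \<and> V \<in> U"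

definition tar_iso_on :: "('v set \<Rightarrow> 'v set) \<Rightarrow> 'v set set \<Rightarrow> 'v set set \<Rightarrow> bool" where
  "tar_iso_on \<phi> U U' \<longleftrightarrow> bij_betw \<phi> U U'
     \<and> (\<forall>S1\<in>U. \<forall>S2\<in>U. tar_adj S1 S2 \<longleftrightarrow> tar_adj (\<phi> S1) (\<phi> S2))"

lemma tar_iso_eq_tar_iso_on: "tar_iso Xs V E V' E' \<phi> \<longleftrightarrow> tar_iso_on \<phi> (Xs V E) (Xs V' E')"
  unfolding tar_iso_def tar_iso_on_def ..

lemma up_family_Xs:
  assumes "Xset_param Xs" "sgraph V E" "no_isolated V E"
  shows "up_family V (Xs V E)"
proof -
  obtain sub: "\<forall>S\<in>Xs V E. S \<subseteq> V"
    and up: "\<forall>S T. S \<in> Xs V E \<longrightarrow> S \<subseteq> T \<longrightarrow> T \<subseteq> V \<longrightarrow> T \<in> Xs V E"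
    and coatoms: "no_isolated V E \<longrightarrow> (\<forall>S. S \<subseteq> V \<longrightarrow> card S = card V - 1 \<longrightarrow> S \<in> Xs V E)"
    using assms(1)[unfolded Xset_param_def, rule_format, OF assms(2)] by (elim conjE)
  have fin: "finite V" and ne: "V \<noteq> {}" using assms(2) unfolding sgraph_def by auto
  have "\<forall>v\<in>V. V - {v} \<in> Xs V E" using coatoms assms(3) fin by auto
  moreover from ne obtain v where "v \<in> V" by blast
  ultimately have "V \<in> Xs V E" using up by blast
  with sub up \<open>\<forall>v\<in>V. V - {v} \<in> Xs V E\<close> fin show ?thesis unfolding up_family_def by blast
qed

context
  fixes V :: "'v set" and U :: "'v set set"
  assumes up: "up_family V U"
begin

lemma up_family_finite: "finite V"
  using up unfolding up_family_def by blast

lemma up_family_subset: "S \<in> U \<Longrightarrow> S \<subseteq> V"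
  using up unfolding up_family_def by blast

lemma up_family_finite_mem: "S \<in> U \<Longrightarrow> finite S"
  using up_family_subset up_family_finite finite_subset by blast

lemma up_family_finite_family: "finite U"
  using up_family_subset up_family_finite by (metis Pow_iff finite_Pow_iff subsetI finite_subset)

lemma up_family_upward: "S \<in> U \<Longrightarrow> S \<subseteq> T \<Longrightarrow> T \<subseteq> V \<Longrightarrow> T \<in> U"
  using up unfolding up_family_def by blast

lemma up_family_insert:
  assumes "S \<in> U" "v \<in> V"
  shows "insert v S \<in> U"
  using up_family_upward[OF assms(1)] up_family_subset[OF assms(1)] assms(2) by blast

lemma up_family_top: "V \<in> U"
  using up unfolding up_family_def by blast

lemma up_family_coatom: "v \<in> V \<Longrightarrow> V - {v} \<in> U"
  using up unfolding up_family_def by blast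

end

lemma symdiff_cancel_left [simp]: "symdiff S (symdiff S T) = T"
  by (auto simp: symdiff_def)

lemma symdiff_cancel_right [simp]: "symdiff (symdiff S T) T = S"
  by (auto simp: symdiff_def)

lemma symdiff_eq_empty_iff: "symdiff S T = {} \<longleftrightarrow> S = T"
  by (auto simp: symdiff_def)

lemma symdiff_singleton_inject: "symdiff S {u} = symdiff S {v} \<longleftrightarrow> u = v"
  by (metis symdiff_cancel_left singleton_inject)

lemma tar_adj_iff: "tar_adj S T \<longleftrightarrow> (\<exists>u. T = symdiff S {u})"
proof
  assume "tar_adj S T"
  then obtain u where "symdiff S T = {u}" unfolding tar_adj_def by (rule card_1_singletonE)
  then show "\<exists>u. T = symdiff S {u}" by (metis symdiff_cancel_left)
qed (auto simp: tar_adj_def)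

lemma card_symdiff_step:
  assumes "finite (symdiff T W)"
  shows "card (symdiff (symdiff T {u}) W)
    = (if u \<in> symdiff T W then card (symdiff T W) - 1 else Suc (card (symdiff T W)))"
proof -
  have "symdiff (symdiff T {u}) W
    = (if u \<in> symdiff T W then symdiff T W - {u} else insert u (symdiff T W))"
    by (auto simp: symdiff_def)
  with assms show ?thesis by simp
qed

lemma card_symdiff_step_le:
  "finite (symdiff T W) \<Longrightarrow> card (symdiff (symdiff T {u}) W) \<le> Suc (card (symdiff T W))"
  by (auto simp: card_symdiff_step)

lemma card_symdiff_step_less_iff:
  assumes "finite (symdiff T W)"
  shows "card (symdiff (symdiff T {u}) W) < card (symdiff T W) \<longleftrightarrow> u \<in> symdiff T W"
proof -
  have "u \<in> symdiff T W \<Longrightarrow> 0 < card (symdiff T W)" using assms card_gt_0_iff by blast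
  with assms show ?thesis by (auto simp: card_symdiff_step)
qed

text \<open>The three conditions characterise the graph distance to \<open>a\<close> in the graph with vertex
  set \<open>A\<close> and adjacency \<open>adj\<close>.\<close>
definition distance_fun :: "('a \<Rightarrow> 'a \<Rightarrow> bool) \<Rightarrow> 'a set \<Rightarrow> 'a \<Rightarrow> ('a \<Rightarrow> nat) \<Rightarrow> bool" where
  "distance_fun adj A a h \<longleftrightarrow> (\<forall>x\<in>A. h x = 0 \<longleftrightarrow> x = a)
     \<and> (\<forall>x\<in>A. \<forall>y\<in>A. adj x y \<longrightarrow> h x \<le> Suc (h y))
     \<and> (\<forall>x\<in>A. x \<noteq> a \<longrightarrow> (\<exists>y\<in>A. adj x y \<and> h y < h x))"

lemma distance_fun_le:
  assumes "distance_fun adj A a h1" "distance_fun adj A a h2" "x \<in> A"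
  shows "h1 x \<le> h2 x"
  using assms(3)
proof (induction "h2 x" arbitrary: x rule: less_induct)
  case less
  show ?case
  proof (cases "x = a")
    case True
    with assms(1) less.prems show ?thesis by (auto simp: distance_fun_def)
  next
    case False
    then obtain y where y: "y \<in> A" "adj x y" "h2 y < h2 x"
      using assms(2) less.prems unfolding distance_fun_def by blast
    with less.hyps have "h1 y \<le> h2 y" by blast
    moreover have "h1 x \<le> Suc (h1 y)"
      using assms(1) less.prems y unfolding distance_fun_def by blast
    ultimately show ?thesis using y(3) by linarith
  qed
qed

lemma distance_fun_unique:
  assumes "distance_fun adj A a h1" "distance_fun adj A a h2" "x \<in> A"
  shows "h1 x = h2 x"
  using distance_fun_le[OF assms] distance_fun_le[OF assms(2,1,3)] by (rule antisym)

lemma up_family_closer_neighbour: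
  assumes "up_family V U" "x \<in> U" "a \<in> U" "x \<noteq> a"
  obtains u where "u \<in> symdiff x a" "symdiff x {u} \<in> U"
proof (cases "a \<subseteq> x")
  case True
  with assms(4) obtain u where u: "u \<in> x - a" by blast
  then have "u \<in> symdiff x a" "symdiff x {u} = x - {u}" by (auto simp: symdiff_def)
  moreover have "x - {u} \<in> U"
    using True u up_family_subset[OF assms(1,2)] by (intro up_family_upward[OF assms(1,3)]) auto
  ultimately show thesis using that by simp
next
  case False
  then obtain u where u: "u \<in> a - x" by blast
  then have "u \<in> symdiff x a" "symdiff x {u} = insert u x" by (auto simp: symdiff_def)
  moreover have "insert u x \<in> U"
    using u up_family_subset[OF assms(1,3)] by (intro up_family_insert[OF assms(1,2)]) auto
  ultimately show thesis using that by simp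
qed

lemma distance_fun_card_symdiff:
  assumes "up_family V U" "a \<in> U"
  shows "distance_fun tar_adj U a (\<lambda>x. card (symdiff x a))"
proof -
  have fin: "finite (symdiff x a)" if "x \<in> U" for x
    using up_family_finite_mem[OF assms(1)] that assms(2) by (simp add: symdiff_def)
  have zero: "\<forall>x\<in>U. card (symdiff x a) = 0 \<longleftrightarrow> x = a"
    using fin by (simp add: symdiff_eq_empty_iff)
  have lipschitz: "\<forall>x\<in>U. \<forall>y\<in>U. tar_adj x y \<longrightarrow> card (symdiff x a) \<le> Suc (card (symdiff y a))"
  proof (intro ballI impI)
    fix x y assume "x \<in> U" "y \<in> U" "tar_adj x y"
    then obtain u where "y = symdiff x {u}" by (auto simp: tar_adj_iff)
    then have "x = symdiff y {u}" by simp
    with card_symdiff_step_le[OF fin[OF \<open>y \<in> U\<close>], of u]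
    show "card (symdiff x a) \<le> Suc (card (symdiff y a))" by simp
  qed
  have descent: "\<forall>x\<in>U. x \<noteq> a \<longrightarrow> (\<exists>y\<in>U. tar_adj x y \<and> card (symdiff y a) < card (symdiff x a))"
  proof (intro ballI impI)
    fix x assume "x \<in> U" "x \<noteq> a"
    obtain u where u: "u \<in> symdiff x a" "symdiff x {u} \<in> U"
      using assms(1) \<open>x \<in> U\<close> assms(2) \<open>x \<noteq> a\<close> by (rule up_family_closer_neighbour)
    moreover have "card (symdiff (symdiff x {u}) a) < card (symdiff x a)"
      using card_symdiff_step_less_iff[OF fin[OF \<open>x \<in> U\<close>]] u(1) by blast
    ultimately show "\<exists>y\<in>U. tar_adj x y \<and> card (symdiff y a) < card (symdiff x a)"
      by (auto simp: tar_adj_iff)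
  qed
  from zero lipschitz descent show ?thesis unfolding distance_fun_def by (intro conjI)
qed

lemma tar_iso_onD:
  assumes "tar_iso_on \<phi> U U'"
  shows "inj_on \<phi> U" "\<phi> ` U = U'"
    "\<And>x y. x \<in> U \<Longrightarrow> y \<in> U \<Longrightarrow> tar_adj (\<phi> x) (\<phi> y) \<longleftrightarrow> tar_adj x y"
  using assms unfolding tar_iso_on_def bij_betw_def by auto

lemma distance_fun_comp_tar_iso_on:
  assumes "tar_iso_on \<phi> U U'" "a \<in> U" "distance_fun tar_adj U' (\<phi> a) h"
  shows "distance_fun tar_adj U a (h \<circ> \<phi>)"
proof -
  note iso = tar_iso_onD[OF assms(1)]
  obtain zero: "\<forall>z\<in>U'. h z = 0 \<longleftrightarrow> z = \<phi> a"
    and lipschitz: "\<forall>z\<in>U'. \<forall>w\<in>U'. tar_adj z w \<longrightarrow> h z \<le> Suc (h w)"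
    and descent: "\<forall>z\<in>U'. z \<noteq> \<phi> a \<longrightarrow> (\<exists>w\<in>U'. tar_adj z w \<and> h w < h z)"
    using assms(3) unfolding distance_fun_def by (elim conjE)
  have maps: "\<phi> x \<in> U'" if "x \<in> U" for x using iso(2) that by blast
  have inj: "\<phi> x = \<phi> a \<longleftrightarrow> x = a" if "x \<in> U" for x
    using inj_on_eq_iff[OF iso(1) that assms(2)] .
  have "\<exists>y\<in>U. tar_adj x y \<and> h (\<phi> y) < h (\<phi> x)" if x: "x \<in> U" "x \<noteq> a" for x
  proof -
    obtain w where "w \<in> U'" "tar_adj (\<phi> x) w" "h w < h (\<phi> x)"
      using descent maps[OF x(1)] inj[OF x(1)] x(2) by blast
    moreover from \<open>w \<in> U'\<close> obtain y where "y \<in> U" "w = \<phi> y" using iso(2) by blast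
    ultimately show ?thesis using iso(3) x(1) by blast
  qed
  with zero lipschitz maps inj iso(3) show ?thesis
    unfolding distance_fun_def comp_apply by metis
qed

lemma tar_iso_on_card_symdiff:
  assumes "up_family V U" "up_family V' U'" "tar_iso_on \<phi> U U'" "x \<in> U" "a \<in> U"
  shows "card (symdiff (\<phi> x) (\<phi> a)) = card (symdiff x a)"
proof -
  have "\<phi> a \<in> U'" using tar_iso_onD(2)[OF assms(3)] assms(5) by blast
  then have "distance_fun tar_adj U a ((\<lambda>z. card (symdiff z (\<phi> a))) \<circ> \<phi>)"
    by (intro distance_fun_comp_tar_iso_on[OF assms(3,5)] distance_fun_card_symdiff[OF assms(2)])
  from distance_fun_unique[OF this distance_fun_card_symdiff[OF assms(1,5)] assms(4)]
  show ?thesis by simp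
qed


lemma tar_iso_on_card_neighbours:
  assumes "tar_iso_on \<phi> U U'" "x \<in> U" "\<And>y. y \<in> U \<Longrightarrow> P y \<longleftrightarrow> Q (\<phi> y)"
  shows "card {y\<in>U. tar_adj x y \<and> P y} = card {z\<in>U'. tar_adj (\<phi> x) z \<and> Q z}"
proof -
  note iso = tar_iso_onD[OF assms(1)]
  have "{z\<in>U'. tar_adj (\<phi> x) z \<and> Q z} = \<phi> ` {y\<in>U. tar_adj x y \<and> P y}"
    using iso(2,3) assms(2,3) by auto
  moreover have "inj_on \<phi> {y\<in>U. tar_adj x y \<and> P y}"
    using iso(1) by (rule inj_on_subset) blast
  ultimately show ?thesis by (simp add: card_image)
qed

lemma card_closer_neighbours:
  assumes "finite (symdiff x a)"
  shows "card {y\<in>U. tar_adj x y \<and> card (symdiff y a) < card (symdiff x a)}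
    = card {u\<in>symdiff x a. symdiff x {u} \<in> U}"
proof -
  have "{y\<in>U. tar_adj x y \<and> card (symdiff y a) < card (symdiff x a)}
    = (\<lambda>u. symdiff x {u}) ` {u\<in>symdiff x a. symdiff x {u} \<in> U}"
    by (auto simp: tar_adj_iff card_symdiff_step_less_iff[OF assms])
  moreover have "inj_on (\<lambda>u. symdiff x {u}) {u\<in>symdiff x a. symdiff x {u} \<in> U}"
    by (auto intro: inj_onI simp: symdiff_singleton_inject)
  ultimately show ?thesis by (simp add: card_image)
qed

text \<open>In \<open>U\<close> every \<open>x\<close> has the maximal number \<open>|x \<ominus> V|\<close> of neighbours closer to the
  top \<open>V\<close>; the isometry transports this to \<open>\<phi> x\<close> and the top's image \<open>\<phi> V\<close>.\<close>
lemma tar_iso_on_step_toward_image_top: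
  assumes "up_family V U" "up_family V' U'" "tar_iso_on \<phi> U U'"
    and "T \<in> U'" "u \<in> symdiff T (\<phi> V)"
  shows "symdiff T {u} \<in> U'"
proof -
  note iso = tar_iso_onD[OF assms(3)]
  obtain x where x: "x \<in> U" "T = \<phi> x" using assms(4) iso(2) by blast
  have top': "\<phi> V \<in> U'" using iso(2) up_family_top[OF assms(1)] by blast
  have fin: "finite (symdiff x V)" "finite (symdiff T (\<phi> V))"
    using up_family_finite_mem[OF assms(1) x(1)] up_family_finite[OF assms(1)]
      up_family_finite_mem[OF assms(2) assms(4)] up_family_finite_mem[OF assms(2) top']
    by (simp_all add: symdiff_def)
  have dist: "card (symdiff (\<phi> y) (\<phi> V)) = card (symdiff y V)" if "y \<in> U" for y
    using tar_iso_on_card_symdiff[OF assms(1-3) that up_family_top[OF assms(1)]] .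
  have "symdiff x {u} \<in> U" if "u \<in> symdiff x V" for u
  proof -
    have "u \<in> V" "symdiff x {u} = insert u x"
      using that up_family_subset[OF assms(1) x(1)] by (auto simp: symdiff_def)
    with up_family_insert[OF assms(1) x(1)] show ?thesis by simp
  qed
  then have up_steps: "{u\<in>symdiff x V. symdiff x {u} \<in> U} = symdiff x V" by blast
  have "card {u\<in>symdiff T (\<phi> V). symdiff T {u} \<in> U'}
      = card {z\<in>U'. tar_adj T z \<and> card (symdiff z (\<phi> V)) < card (symdiff T (\<phi> V))}"
    using card_closer_neighbours[OF fin(2)] by simp
  also have "\<dots> = card {y\<in>U. tar_adj x y \<and> card (symdiff y V) < card (symdiff x V)}"
  proof -
    have "card (symdiff y V) < card (symdiff x V)
      \<longleftrightarrow> card (symdiff (\<phi> y) (\<phi> V)) < card (symdiff T (\<phi> V))" if "y \<in> U" for y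
      using dist[OF that] dist[OF x(1)] x(2) by simp
    from tar_iso_on_card_neighbours[OF assms(3) x(1),
        where P = "\<lambda>y. card (symdiff y V) < card (symdiff x V)"
          and Q = "\<lambda>z. card (symdiff z (\<phi> V)) < card (symdiff T (\<phi> V))", OF this]
    show ?thesis using x(2) by simp
  qed
  also have "\<dots> = card (symdiff T (\<phi> V))"
    using card_closer_neighbours[OF fin(1)] up_steps dist x by simp
  finally have "{u\<in>symdiff T (\<phi> V). symdiff T {u} \<in> U'} = symdiff T (\<phi> V)"
    using fin(2) by (intro card_subset_eq) auto
  with assms(5) show ?thesis by blast
qed

lemma card_neighbours_le:
  assumes "up_family V U" "x \<in> U"
  shows "card {y\<in>U. tar_adj x y} \<le> card V"
proof -
  have "{y\<in>U. tar_adj x y} \<subseteq> (\<lambda>u. symdiff x {u}) ` V"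
  proof
    fix y assume y: "y \<in> {y\<in>U. tar_adj x y}"
    then obtain u where u: "y = symdiff x {u}" by (auto simp: tar_adj_iff)
    then have "u \<in> symdiff x y" by (auto simp: symdiff_def)
    with y assms have "u \<in> V" using up_family_subset by (fastforce simp: symdiff_def)
    with u show "y \<in> (\<lambda>u. symdiff x {u}) ` V" by blast
  qed
  then show ?thesis
    using up_family_finite[OF assms(1)] by (meson card_image_le card_mono finite_imageI le_trans)
qed

lemma card_neighbours_top:
  assumes "up_family V U"
  shows "card {y\<in>U. tar_adj V y} = card V"
proof (rule antisym)
  have "(\<lambda>u. V - {u}) ` V \<subseteq> {y\<in>U. tar_adj V y}"
  proof
    fix y assume "y \<in> (\<lambda>u. V - {u}) ` V"
    then obtain u where u: "u \<in> V" "y = V - {u}" by blast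
    then have "y = symdiff V {u}" by (auto simp: symdiff_def)
    with up_family_coatom[OF assms u(1)] u(2) show "y \<in> {y\<in>U. tar_adj V y}"
      by (auto simp: tar_adj_iff)
  qed
  moreover have "inj_on (\<lambda>u. V - {u}) V" by (rule inj_onI) blast
  moreover have "finite {y\<in>U. tar_adj V y}"
    using up_family_finite_family[OF assms] by simp
  ultimately show "card V \<le> card {y\<in>U. tar_adj V y}"
    by (metis card_image card_mono)
qed (rule card_neighbours_le[OF assms up_family_top[OF assms]])

lemma tar_iso_on_card_eq:
  assumes "up_family V U" "up_family V' U'" "tar_iso_on \<phi> U U'"
  shows "card V = card V'"
proof (rule antisym)
  note iso = tar_iso_onD[OF assms(3)]
  have degree: "card {y\<in>U. tar_adj x y} = card {z\<in>U'. tar_adj (\<phi> x) z}" if "x \<in> U" for x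
    using tar_iso_on_card_neighbours[OF assms(3) that, where P="\<lambda>_. True" and Q="\<lambda>_. True"]
    by simp
  show "card V \<le> card V'"
    using degree[OF up_family_top[OF assms(1)]] card_neighbours_top[OF assms(1)]
      card_neighbours_le[OF assms(2)] iso(2) up_family_top[OF assms(1)] by fastforce
  obtain x where "x \<in> U" "\<phi> x = V'" using iso(2) up_family_top[OF assms(2)] by blast
  then show "card V' \<le> card V"
    using degree card_neighbours_top[OF assms(2)] card_neighbours_le[OF assms(1)] by metis
qed

lemma tar_iso_on_remove_outside_image_top:
  assumes "up_family V U" "up_family V' U'" "tar_iso_on \<phi> U U'"
    and "T \<in> U'" "u \<in> T - \<phi> V"
  shows "T - {u} \<in> U'"
proof -
  have "u \<in> symdiff T (\<phi> V)" "symdiff T {u} = T - {u}"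
    using assms(5) by (auto simp: symdiff_def)
  with tar_iso_on_step_toward_image_top[OF assms(1-4)] show ?thesis by metis
qed

lemma Diff_mem_if_remove_closed:
  assumes "\<And>T u. T \<in> U \<Longrightarrow> u \<in> T - W \<Longrightarrow> T - {u} \<in> U"
    and "finite A" "A \<inter> W = {}" "T \<in> U"
  shows "T - A \<in> U"
  using assms(2,3)
proof (induction A rule: finite_induct)
  case empty
  with assms(4) show ?case by simp
next
  case (insert a A)
  then have IH: "T - A \<in> U" and "a \<notin> W" by blast+
  show ?case
  proof (cases "a \<in> T")
    case True
    with \<open>a \<notin> W\<close> \<open>a \<notin> A\<close> have "a \<in> T - A - W" by blast
    from assms(1)[OF IH this] show ?thesis by (metis Diff_insert)
  next
    case False
    then have "T - insert a A = T - A" by blast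
    with IH show ?thesis by simp
  qed
qed

lemma nu_nu [simp]: "nu R (nu R S) = S"
  by (auto simp: nu_def symdiff_def)

lemma tar_adj_nu [simp]: "tar_adj (nu R S1) (nu R S2) \<longleftrightarrow> tar_adj S1 S2"
proof -
  have "symdiff (nu R S1) (nu R S2) = symdiff S1 S2" by (auto simp: nu_def symdiff_def)
  then show ?thesis unfolding tar_adj_def by simp
qed

lemma tar_iso_on_nu:
  assumes "\<And>T. T \<in> U \<Longrightarrow> nu R T \<in> U"
  shows "tar_iso_on (nu R) U U"
  unfolding tar_iso_on_def
  by (auto intro!: bij_betw_byWitness[where f'="nu R"] assms)

lemma tar_iso_on_comp:
  assumes "tar_iso_on \<phi> U U'" "tar_iso_on \<psi> U' U''"
  shows "tar_iso_on (\<psi> \<circ> \<phi>) U U''"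
  using assms bij_betw_trans bij_betwE unfolding tar_iso_on_def comp_apply by metis

lemma tar_iso_on_nu_comp:
  assumes "up_family V U" "up_family V' U'" "tar_iso_on \<phi> U U'"
  shows "tar_iso_on (nu (V' - \<phi> V) \<circ> \<phi>) U U'"
proof (rule tar_iso_on_comp[OF assms(3) tar_iso_on_nu])
  fix T assume T: "T \<in> U'"
  have "T - (T - \<phi> V) \<in> U'"
  proof (rule Diff_mem_if_remove_closed[where W = "\<phi> V"])
    show "finite (T - \<phi> V)" using up_family_finite_mem[OF assms(2) T] by simp
  qed (use tar_iso_on_remove_outside_image_top[OF assms] T in blast)+
  moreover have "T - (T - \<phi> V) \<subseteq> nu (V' - \<phi> V) T" "nu (V' - \<phi> V) T \<subseteq> V'"
    using up_family_subset[OF assms(2) T] by (auto simp: nu_def symdiff_def)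
  ultimately show "nu (V' - \<phi> V) T \<in> U'" by (rule up_family_upward[OF assms(2)])
qed

lemma symdiff_Diff_eq: "T \<subseteq> V \<Longrightarrow> W \<subseteq> V \<Longrightarrow> symdiff T (V - W) = V - symdiff T W"
  by (auto simp: symdiff_def)

lemma card_nu_comp:
  assumes "up_family V U" "up_family V' U'" "tar_iso_on \<phi> U U'" "S \<in> U"
  shows "card (nu (V' - \<phi> V) (\<phi> S)) = card S"
proof -
  note iso = tar_iso_onD[OF assms(3)]
  have sub: "\<phi> S \<subseteq> V'" "\<phi> V \<subseteq> V'" "S \<subseteq> V"
    using iso(2) assms(4) up_family_top[OF assms(1)] up_family_subset assms(1,2) by auto
  have fin: "finite V" "finite V'" using up_family_finite assms(1,2) by auto
  have "symdiff (\<phi> S) (\<phi> V) \<subseteq> V'" using sub by (auto simp: symdiff_def)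
  have "card (nu (V' - \<phi> V) (\<phi> S)) = card (V' - symdiff (\<phi> S) (\<phi> V))"
    using sub by (simp add: nu_def symdiff_Diff_eq)
  also have "\<dots> = card V' - card (symdiff (\<phi> S) (\<phi> V))"
    using \<open>symdiff (\<phi> S) (\<phi> V) \<subseteq> V'\<close> fin(2) by (simp add: card_Diff_subset finite_subset)
  also have "\<dots> = card V - card (V - S)"
    using tar_iso_on_card_symdiff[OF assms(1-4) up_family_top[OF assms(1)]] sub
      tar_iso_on_card_eq[OF assms(1-3)] by (simp add: symdiff_def Diff_eq_empty_iff[THEN iffD2])
  also have "\<dots> = card S"
    using sub fin by (simp add: card_Diff_subset card_mono diff_diff_cancel finite_subset)
  finally show ?thesis .
qed

lemma X_irrelevant_setI:
  assumes "R \<subseteq> V" "\<And>T u. T \<in> Xs V E \<Longrightarrow> u \<in> T \<inter> R \<Longrightarrow> T - {u} \<in> Xs V E"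
  shows "X_irrelevant_set Xs V E R"
  using assms unfolding X_irrelevant_set_def X_irrelevant_vertex_def minimal_Xset_def by blast

theorem theorem2p10:
  fixes Xs :: "'v set \<Rightarrow> ('v \<times> 'v) set \<Rightarrow> 'v set set"
    and V V' :: "'v set" and E E' :: "('v \<times> 'v) set"
    and \<phi>t :: "'v set \<Rightarrow> 'v set"
  assumes "Xset_param Xs"
    and "sgraph V E" and "no_isolated V E"
    and "sgraph V' E'" and "no_isolated V' E'"
    and "tar_iso Xs V E V' E' \<phi>t"
  shows "X_irrelevant_set Xs V' E' (V' - \<phi>t V)
    \<and> tar_iso Xs V E V' E' (nu (V' - \<phi>t V) \<circ> \<phi>t)
    \<and> (\<forall>S\<in>Xs V E. card ((nu (V' - \<phi>t V) \<circ> \<phi>t) S) = card S)"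
proof -
  have up: "up_family V (Xs V E)" and up': "up_family V' (Xs V' E')"
    using up_family_Xs assms(1-5) by blast+
  have iso: "tar_iso_on \<phi>t (Xs V E) (Xs V' E')"
    using assms(6) by (simp add: tar_iso_eq_tar_iso_on)
  have "X_irrelevant_set Xs V' E' (V' - \<phi>t V)"
    using tar_iso_on_remove_outside_image_top[OF up up' iso] by (intro X_irrelevant_setI) auto
  moreover have "tar_iso Xs V E V' E' (nu (V' - \<phi>t V) \<circ> \<phi>t)"
    using tar_iso_on_nu_comp[OF up up' iso] by (simp add: tar_iso_eq_tar_iso_on)
  moreover have "\<forall>S\<in>Xs V E. card ((nu (V' - \<phi>t V) \<circ> \<phi>t) S) = card S"
    using card_nu_comp[OF up up' iso] by simp
  ultimately show ?thesis by blast
qed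

end
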